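(* Let $(\Omega,\mathcal{F},\mathbb{P})$ be a nonatomic probability space and $(\Phi,\Psi)$ an Orlicz pair as in the context. Let $X\in L^\Phi$. Then the net $(\mathbb{E}[X|\pi])_{\pi\in\Pi}$ order converges to $X$ in $L^\Phi$ if and only if $X\in L^\infty$.
   Context: $(\Omega,\mathcal{F},\mathbb{P})$ is a nonatomic probability space. An Orlicz function is a convex, increasing $\Phi:[0,\infty)\to[0,\infty)$ with $\Phi(0)=0$; its conjugate is $\Psi(s)=\sup_{t\ge0}(ts-\Phi(t))$. Standing assumption: $\Phi(t)>0$ for $t>0$ and $\lim_{t\to\infty}\Phi(t)/t=\infty$. $L^\Phi$ is the space (a Banach lattice under the a.s. order) of random variables $X$ (mod a.s. equality) with $\|X\|_\Phi:=\inf\{\lambda>0:\mathbb{E}[\Phi(|X|/\lambda)]\le 1\}<\infty$. $\Pi$ denotes the set of all finite measurable partitions of $\Omega$ whose members all have nonzero probability, directed by refinement; $\mathbb{E}[X|\pi]:=\mathbb{E}[X|\sigma(\pi)]$. A net $(X_\alpha)$ in $L^\Phi$ order converges to $X\in L^\Phi$ if there is a net $(Y_\alpha)$ in $L^\Phi$ (same index set) which is decreasing with infimum $0$ in $L^\Phi$ and satisfies $|X_\alpha-X|\le Y_\alpha$ for all $\alpha$. *)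

theory Defs
  imports "HOL-Probability.Probability"
begin

definition nonatomic :: "'a measure \<Rightarrow> bool" where
  "nonatomic M \<longleftrightarrow> (\<forall>A\<in>sets M. measure M A > 0 \<longrightarrow>
      (\<exists>B\<in>sets M. B \<subseteq> A \<and> 0 < measure M B \<and> measure M B < measure M A))"

definition orlicz_fun :: "(real \<Rightarrow> real) \<Rightarrow> bool" where
  "orlicz_fun \<Phi> \<longleftrightarrow> convex_on {0..} \<Phi> \<and> mono_on {0..} \<Phi> \<and> \<Phi> 0 = 0
     \<and> (\<forall>t\<ge>0. 0 \<le> \<Phi> t)
     \<and> (\<forall>t>0. 0 < \<Phi> t)
     \<and> filterlim (\<lambda>t. \<Phi> t / t) at_top at_top"

text \<open>The Orlicz space: measurable X with Luxemburg norm finite, i.e. some lambda>0 with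
  E[Phi(|X|/lambda)] \<le> 1.\<close>
definition LPhi :: "'a measure \<Rightarrow> (real \<Rightarrow> real) \<Rightarrow> ('a \<Rightarrow> real) set" where
  "LPhi M \<Phi> = {X \<in> borel_measurable M.
      \<exists>l>0. (\<integral>\<^sup>+ \<omega>. ennreal (\<Phi> (\<bar>X \<omega>\<bar> / l)) \<partial>M) \<le> 1}"

definition Linf :: "'a measure \<Rightarrow> ('a \<Rightarrow> real) set" where
  "Linf M = {X \<in> borel_measurable M. \<exists>C. AE \<omega> in M. \<bar>X \<omega>\<bar> \<le> C}"

definition partitions :: "'a measure \<Rightarrow> 'a set set set" where
  "partitions M = {P. finite P \<and> P \<subseteq> sets M \<and> (\<forall>A\<in>P. measure M A > 0)
      \<and> disjoint P \<and> \<Union>P = space M}"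

text \<open>part_refines P Q: Q is a refinement of P (Q comes later in the directed order).\<close>
definition part_refines :: "'a set set \<Rightarrow> 'a set set \<Rightarrow> bool" where
  "part_refines P Q \<longleftrightarrow> (\<forall>B\<in>Q. \<exists>A\<in>P. B \<subseteq> A)"

definition cond_exp_part :: "'a measure \<Rightarrow> 'a set set \<Rightarrow> ('a \<Rightarrow> real) \<Rightarrow> ('a \<Rightarrow> real)" where
  "cond_exp_part M P X = real_cond_exp M (sigma (space M) P) X"

definition order_conv :: "'a measure \<Rightarrow> (real \<Rightarrow> real) \<Rightarrow> 'i set \<Rightarrow> ('i \<Rightarrow> 'i \<Rightarrow> bool)
    \<Rightarrow> ('i \<Rightarrow> 'a \<Rightarrow> real) \<Rightarrow> ('a \<Rightarrow> real) \<Rightarrow> bool" where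
  "order_conv M \<Phi> I le x X \<longleftrightarrow>
     X \<in> LPhi M \<Phi> \<and> (\<forall>i\<in>I. x i \<in> LPhi M \<Phi>) \<and>
     (\<exists>Y. (\<forall>i\<in>I. Y i \<in> LPhi M \<Phi>)
        \<and> (\<forall>i\<in>I. \<forall>j\<in>I. le i j \<longrightarrow> (AE \<omega> in M. Y j \<omega> \<le> Y i \<omega>))
        \<and> (\<forall>i\<in>I. AE \<omega> in M. 0 \<le> Y i \<omega>)
        \<and> (\<forall>Z\<in>LPhi M \<Phi>. (\<forall>i\<in>I. AE \<omega> in M. Z \<omega> \<le> Y i \<omega>) \<longrightarrow> (AE \<omega> in M. Z \<omega> \<le> 0))
        \<and> (\<forall>i\<in>I. AE \<omega> in M. \<bar>x i \<omega> - X \<omega>\<bar> \<le> Y i \<omega>))"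

end

theory Submission
  imports Defs
begin

text \<open>If \<open>X\<close> is essentially bounded, then for every \<open>e > 0\<close> the level sets of \<open>X\<close> of mesh \<open>e\<close>
  form a partition on whose cells \<open>X\<close> oscillates by at most \<open>e\<close>. On every finer partition the
  conditional expectation is the cell average, hence within \<open>e\<close> of \<open>X\<close>; the best such constant
  bound beyond \<open>\<pi>\<close> decreases to \<open>0\<close> along the net and dominates \<open>\<bar>E[X|\<pi>] - X\<bar>\<close>.

  Conversely, an order convergent net indexed by \<open>\<Pi>\<close> is dominated by the single random variable
  \<open>Y{\<Omega>}\<close>. If \<open>X\<close> is unbounded, say \<open>s X\<close> has an unbounded tail for a sign \<open>s\<close>, pick \<open>n\<close> such that
  \<open>A = {\<bar>X\<bar> \<le> n, Y \<le> n}\<close> has positive measure. By nonatomicity a small piece \<open>A'\<close> of \<open>A\<close> can be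
  glued to a tail set \<open>T = {s X > m}\<close> of at least the same measure; on \<open>A'\<close> the conditional
  expectation for the partition \<open>{A' \<union> T, \<Omega> - (A' \<union> T)}\<close> is the average of \<open>X\<close> over
  \<open>A' \<union> T\<close>, which is more than \<open>n\<close> away from \<open>X\<close>, contradicting the domination by \<open>Y\<close>.\<close>

lemma AE_le_if_AE_le_add:
  fixes f g :: "'a \<Rightarrow> real"
  assumes "\<And>e. e > 0 \<Longrightarrow> AE w in M. f w \<le> g w + e"
  shows "AE w in M. f w \<le> g w"
proof -
  have "AE w in M. \<forall>n. f w \<le> g w + 1 / Suc n"
    using assms by (simp add: AE_all_countable)
  then show ?thesis
  proof eventually_elim
    case (elim w)
    show "f w \<le> g w"
    proof (rule field_le_epsilon)
      fix e :: real assume "e > 0"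
      then obtain n where "1 / Suc n < e" by (rule nat_approx_posE)
      then show "f w \<le> g w + e" using elim[rule_format, of n] by linarith
    qed
  qed
qed

lemma (in finite_measure) measure_zero_iff_AE_notin:
  "A \<in> sets M \<Longrightarrow> measure M A = 0 \<longleftrightarrow> (AE w in M. w \<notin> A)"
  by (simp add: AE_iff_null_sets[symmetric] null_sets_def emeasure_eq_measure)

lemma (in prob_space) exists_nat_measure_le_pos:
  fixes f :: "'a \<Rightarrow> real"
  assumes [measurable]: "f \<in> borel_measurable M"
  shows "\<exists>n::nat. measure M {w \<in> space M. f w \<le> n} > 0"
proof (rule ccontr)
  assume "\<not> ?thesis"
  then have "AE w in M. w \<notin> {w \<in> space M. f w \<le> real n}" for n
    by (subst measure_zero_iff_AE_notin[symmetric]) (auto simp: not_less measure_le_0_iff)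
  then have "AE w in M. \<forall>n::nat. \<not> f w \<le> n"
    by (simp add: AE_all_countable)
  then have "AE w in M. False"
    by eventually_elim (meson real_arch_simple)
  then show False by simp
qed

lemma (in prob_space) nonatomic_small_subset:
  assumes "nonatomic M" "A \<in> sets M" "measure M A > 0" "d > 0"
  shows "\<exists>B\<in>sets M. B \<subseteq> A \<and> 0 < measure M B \<and> measure M B \<le> d"
proof -
  have halving: "\<exists>B\<in>sets M. B \<subseteq> A \<and> 0 < measure M B \<and> measure M B \<le> measure M A / 2 ^ k" for k
  proof (induction k)
    case 0
    then show ?case using assms(2,3) by auto
  next
    case (Suc k)
    then obtain B where B: "B \<in> sets M" "B \<subseteq> A" "0 < measure M B"
      "measure M B \<le> measure M A / 2 ^ k" by auto
    obtain B' where B': "B' \<in> sets M" "B' \<subseteq> B" "0 < measure M B'" "measure M B' < measure M B"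
      using assms(1) B(1,3) unfolding nonatomic_def by blast
    have diff: "measure M (B - B') = measure M B - measure M B'"
      using B' B(1) by (intro finite_measure_Diff) auto
    have half: "measure M B / 2 \<le> measure M A / 2 ^ Suc k"
      using B(4) by (simp add: divide_right_mono)
    \<comment> \<open>the smaller of the two pieces \<open>B'\<close>, \<open>B - B'\<close> has at most half the measure of \<open>B\<close>\<close>
    show ?case
    proof (cases "measure M B' \<le> measure M B / 2")
      case True
      then show ?thesis using B B' half by (intro bexI[of _ B']) auto
    next
      case False
      then show ?thesis using B B' diff half by (intro bexI[of _ "B - B'"]) auto
    qed
  qed
  obtain k where "measure M A / d < 2 ^ k"
    using real_arch_pow[of 2 "measure M A / d"] by auto
  then have "measure M A / 2 ^ k \<le> d"
    using assms(4) by (simp add: field_simps)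
  with halving[of k] show ?thesis by (meson order_trans)
qed

lemma (in finite_measure) set_integral_average_between:
  fixes X :: "'a \<Rightarrow> real"
  assumes "B \<in> sets M" "measure M B > 0" "integrable M X"
    and "AE w in M. w \<in> B \<longrightarrow> a \<le> X w \<and> X w \<le> b"
  shows "a \<le> (\<integral>x\<in>B. X x \<partial>M) / measure M B" "(\<integral>x\<in>B. X x \<partial>M) / measure M B \<le> b"
proof -
  have int: "set_integrable M B X" "set_integrable M B (\<lambda>_. c)" for c :: real
    unfolding set_integrable_def using integrable_mult_indicator[OF assms(1,3)] assms(1)
    by (auto simp: emeasure_eq_measure)
  have "measure M B * a = (\<integral>x\<in>B. a \<partial>M)"
    using assms(1) by (simp add: set_integral_const emeasure_eq_measure)
  also have "\<dots> \<le> (\<integral>x\<in>B. X x \<partial>M)"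
    using assms(4) int by (intro set_integral_mono_AE) auto
  finally show "a \<le> (\<integral>x\<in>B. X x \<partial>M) / measure M B"
    using assms(2) by (simp add: pos_le_divide_eq mult.commute)
  have "(\<integral>x\<in>B. X x \<partial>M) \<le> (\<integral>x\<in>B. b \<partial>M)"
    using assms(4) int by (intro set_integral_mono_AE) auto
  also have "\<dots> = measure M B * b"
    using assms(1) by (simp add: set_integral_const emeasure_eq_measure)
  finally show "(\<integral>x\<in>B. X x \<partial>M) / measure M B \<le> b"
    using assms(2) by (simp add: pos_divide_le_eq mult.commute)
qed

lemma (in finite_measure) set_integral_Un_lower_bound:
  fixes f :: "'a \<Rightarrow> real"
  assumes "A \<in> sets M" "T \<in> sets M" "A \<inter> T = {}" "measure M A \<le> measure M T" "integrable M f"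
    and "\<And>w. w \<in> A \<Longrightarrow> - L \<le> f w" "\<And>w. w \<in> T \<Longrightarrow> m \<le> f w" "0 \<le> m + L"
  shows "(m - L) / 2 * measure M (A \<union> T) \<le> (\<integral>x\<in>A \<union> T. f x \<partial>M)"
proof -
  have int: "set_integrable M B f" "set_integrable M B (\<lambda>_. c)" if "B \<in> sets M" for B and c :: real
    unfolding set_integrable_def using integrable_mult_indicator[OF that assms(5)] that
    by (auto simp: emeasure_eq_measure)
  have "- L * measure M A = (\<integral>x\<in>A. - L \<partial>M)"
    using assms(1) by (simp add: set_integral_const emeasure_eq_measure)
  also have "\<dots> \<le> (\<integral>x\<in>A. f x \<partial>M)"
    using assms(1,6) int by (intro set_integral_mono) auto
  finally have "- L * measure M A \<le> (\<integral>x\<in>A. f x \<partial>M)" .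
  moreover have "m * measure M T = (\<integral>x\<in>T. m \<partial>M)"
    using assms(2) by (simp add: set_integral_const emeasure_eq_measure)
  moreover have "\<dots> \<le> (\<integral>x\<in>T. f x \<partial>M)"
    using assms(2,7) int by (intro set_integral_mono) auto
  moreover have "(\<integral>x\<in>A \<union> T. f x \<partial>M) = (\<integral>x\<in>A. f x \<partial>M) + (\<integral>x\<in>T. f x \<partial>M)"
    using assms(1-3) int by (intro set_integral_Un) auto
  moreover have "measure M (A \<union> T) = measure M A + measure M T"
    using assms(1-3) by (intro finite_measure_Union)
  \<comment> \<open>\<open>A\<close> is the smaller set, so its deficit is paid for by half of the surplus on \<open>T\<close>\<close>
  moreover have "(m + L) * measure M A \<le> (m + L) * measure M T"
    using assms(4,8) by (intro mult_left_mono)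
  ultimately show ?thesis by (simp add: field_simps)
qed

section \<open>Orlicz spaces\<close>

lemma orlicz_fun_measurable:
  assumes "orlicz_fun \<Phi>" "f \<in> borel_measurable M" "l \<ge> 0"
  shows "(\<lambda>w. \<Phi> (\<bar>f w\<bar> / l)) \<in> borel_measurable M"
proof -
  have "mono_on {0..} \<Phi>" using assms(1) unfolding orlicz_fun_def by simp
  then have "mono (\<lambda>t. \<Phi> (max 0 t))"
    by (auto intro!: monoI elim!: mono_onD)
  then have "(\<lambda>t. \<Phi> (max 0 t)) \<in> borel_measurable borel"
    by (rule borel_measurable_mono)
  from measurable_compose[OF _ this, of "\<lambda>w. \<bar>f w\<bar> / l"]
  show ?thesis using assms(2,3) by (simp add: max_absorb2)
qed

lemma orlicz_fun_linear_bound: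
  assumes "orlicz_fun \<Phi>"
  obtains T where "T \<ge> 0" "\<And>t. t \<ge> 0 \<Longrightarrow> t \<le> T + \<Phi> t"
proof -
  have "eventually (\<lambda>t. \<Phi> t / t \<ge> 1) at_top"
    using assms unfolding orlicz_fun_def by (simp add: filterlim_at_top)
  then obtain T where T: "\<And>t. t \<ge> T \<Longrightarrow> \<Phi> t / t \<ge> 1"
    by (auto simp: eventually_at_top_linorder)
  have "t \<le> max T 1 + \<Phi> t" if "t \<ge> 0" for t
  proof (cases "t \<ge> max T 1")
    case True
    then have "t > 0" "\<Phi> t / t \<ge> 1" using T[of t] by auto
    then have "t \<le> \<Phi> t" by (simp add: le_divide_eq)
    then show ?thesis using True by linarith
  next
    case False
    have "\<Phi> t \<ge> 0" using assms that unfolding orlicz_fun_def by simp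
    then show ?thesis using False by linarith
  qed
  then show thesis by (intro that[of "max T 1"]) auto
qed

lemma LPhi_measurable: "X \<in> LPhi M \<Phi> \<Longrightarrow> X \<in> borel_measurable M"
  unfolding LPhi_def by simp

lemma LPhi_integrable:
  assumes "prob_space M" "orlicz_fun \<Phi>" "X \<in> LPhi M \<Phi>"
  shows "integrable M X"
proof -
  interpret prob_space M by fact
  have Xm: "X \<in> borel_measurable M" using assms(3) by (rule LPhi_measurable)
  obtain l where l: "l > 0" "(\<integral>\<^sup>+ w. ennreal (\<Phi> (\<bar>X w\<bar> / l)) \<partial>M) \<le> 1"
    using assms(3) unfolding LPhi_def by auto
  obtain T where T: "T \<ge> 0" "\<And>t. t \<ge> 0 \<Longrightarrow> t \<le> T + \<Phi> t"
    using orlicz_fun_linear_bound[OF assms(2)] by blast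
  have \<Phi>_nonneg: "\<Phi> (\<bar>X w\<bar> / l) \<ge> 0" for w
    using assms(2) l(1) unfolding orlicz_fun_def by simp
  have "(\<integral>\<^sup>+ w. ennreal (norm (X w)) \<partial>M)
      \<le> (\<integral>\<^sup>+ w. ennreal (l * T) + ennreal l * ennreal (\<Phi> (\<bar>X w\<bar> / l)) \<partial>M)"
  proof (rule nn_integral_mono)
    fix w
    have "\<bar>X w\<bar> / l \<le> T + \<Phi> (\<bar>X w\<bar> / l)" using T(2) l(1) by simp
    then have "\<bar>X w\<bar> \<le> l * T + l * \<Phi> (\<bar>X w\<bar> / l)" using l(1) by (simp add: field_simps)
    then have "ennreal (norm (X w)) \<le> ennreal (l * T + l * \<Phi> (\<bar>X w\<bar> / l))"
      by (simp add: ennreal_leI)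
    also have "\<dots> = ennreal (l * T) + ennreal l * ennreal (\<Phi> (\<bar>X w\<bar> / l))"
      using l(1) T(1) \<Phi>_nonneg[of w] by (simp add: ennreal_plus ennreal_mult)
    finally show "ennreal (norm (X w)) \<le> ennreal (l * T) + ennreal l * ennreal (\<Phi> (\<bar>X w\<bar> / l))" .
  qed
  also have "\<dots> = ennreal (l * T) + ennreal l * (\<integral>\<^sup>+ w. ennreal (\<Phi> (\<bar>X w\<bar> / l)) \<partial>M)"
    using orlicz_fun_measurable[OF assms(2) Xm, of l] l(1)
    by (simp add: nn_integral_add nn_integral_cmult emeasure_space_1)
  also have "\<dots> < \<infinity>"
    using l(2) by (simp add: ennreal_mult_less_top le_less_trans[OF _ ennreal_one_less_top])
  finally show ?thesis using Xm by (simp add: integrable_iff_bounded)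
qed

lemma bounded_in_LPhi:
  assumes "prob_space M" "orlicz_fun \<Phi>" "f \<in> borel_measurable M" "AE w in M. \<bar>f w\<bar> \<le> C"
  shows "f \<in> LPhi M \<Phi>"
proof -
  interpret prob_space M by fact
  have cvx: "convex_on {0..} \<Phi>" and mono: "mono_on {0..} \<Phi>" and "\<Phi> 0 = 0" "\<Phi> 1 \<ge> 0"
    using assms(2) unfolding orlicz_fun_def by auto
  define C' where "C' = max C 0"
  define l where "l = C' + C' * \<Phi> 1 + 1"
  define t where "t = C' / l"
  have "C' \<ge> 0" by (simp add: C'_def)
  moreover have "C' * \<Phi> 1 \<ge> 0" using \<open>C' \<ge> 0\<close> \<open>\<Phi> 1 \<ge> 0\<close> by simp
  ultimately have "l > 0" "C' \<le> l" "C' * \<Phi> 1 \<le> l"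
    unfolding l_def by linarith+
  then have "t \<ge> 0" "t \<le> 1" "t * \<Phi> 1 \<le> 1"
    using \<open>C' \<ge> 0\<close> by (simp_all add: t_def field_simps)
  \<comment> \<open>convexity with \<open>\<Phi> 0 = 0\<close> gives \<open>\<Phi> t \<le> t \<Phi> 1\<close> on \<open>[0, 1]\<close>\<close>
  have "\<Phi> t \<le> (1 - t) * \<Phi> 0 + t * \<Phi> 1"
    using convex_onD[OF cvx, of t 0 1] \<open>t \<ge> 0\<close> \<open>t \<le> 1\<close> by simp
  then have \<Phi>t: "\<Phi> t \<le> 1" using \<open>\<Phi> 0 = 0\<close> \<open>t * \<Phi> 1 \<le> 1\<close> by simp
  have "(\<integral>\<^sup>+ w. ennreal (\<Phi> (\<bar>f w\<bar> / l)) \<partial>M) \<le> (\<integral>\<^sup>+ w. ennreal (\<Phi> t) \<partial>M)"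
  proof (rule nn_integral_mono_AE)
    show "AE w in M. ennreal (\<Phi> (\<bar>f w\<bar> / l)) \<le> ennreal (\<Phi> t)"
      using assms(4)
    proof eventually_elim
      case (elim w)
      then have "\<bar>f w\<bar> / l \<le> t"
        using \<open>l > 0\<close> by (simp add: t_def C'_def divide_right_mono)
      then show ?case
        using \<open>l > 0\<close> \<open>t \<ge> 0\<close> by (intro ennreal_leI mono_onD[OF mono]) auto
    qed
  qed
  also have "\<dots> \<le> 1" using \<Phi>t by (simp add: emeasure_space_1)
  finally show ?thesis unfolding LPhi_def using assms(3) \<open>l > 0\<close> by auto
qed

section \<open>Finite partitions and conditional expectations\<close>

lemma partitions_trivial: "prob_space M \<Longrightarrow> {space M} \<in> partitions M"
  unfolding partitions_def by (simp add: prob_space.prob_space disjoint_def)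

lemma part_refines_refl: "part_refines P P"
  unfolding part_refines_def by auto

lemma part_refines_trans: "part_refines P Q \<Longrightarrow> part_refines Q R \<Longrightarrow> part_refines P R"
  unfolding part_refines_def by (meson order_trans)

lemma part_refines_trivial: "P \<in> partitions M \<Longrightarrow> part_refines {space M} P"
  unfolding partitions_def part_refines_def by (auto dest: sets.sets_into_space)

lemma sigma_finite_subalgebra_sigma:
  assumes "prob_space M" "P \<subseteq> sets M"
  shows "sigma_finite_subalgebra M (sigma (space M) P)"
proof -
  interpret prob_space M by fact
  have "P \<subseteq> Pow (space M)" using assms(2) sets.sets_into_space by auto
  then have "subalgebra M (sigma (space M) P)"
    unfolding subalgebra_def using assms(2) by (simp add: sets.sigma_sets_subset)
  then show ?thesis
    by (intro finite_measure_subalgebra_is_sigma_finite finite_measure_subalgebra.intro)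
       (simp_all add: finite_measure_axioms finite_measure_subalgebra_axioms_def)
qed

lemma sigma_sets_partition_subset:
  assumes "disjoint Q" "\<Union>Q = \<Omega>"
  shows "sigma_sets \<Omega> Q \<subseteq> Union ` Pow Q"
proof
  fix A assume "A \<in> sigma_sets \<Omega> Q"
  then show "A \<in> Union ` Pow Q"
  proof induct
    case (Basic a)
    then show ?case by (intro image_eqI[of _ _ "{a}"]) auto
  next
    case Empty
    then show ?case by (intro image_eqI[of _ _ "{}"]) auto
  next
    case (Compl a)
    then obtain S where S: "S \<subseteq> Q" "a = \<Union>S" by auto
    have "\<Omega> - \<Union>S = \<Union>(Q - S)"
    proof
      show "\<Omega> - \<Union>S \<subseteq> \<Union>(Q - S)" using assms(2) by auto
      show "\<Union>(Q - S) \<subseteq> \<Omega> - \<Union>S"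
        using assms S(1) disjointD[OF assms(1)] by blast
    qed
    then show ?case using S by auto
  next
    case (Union A)
    have "\<exists>S. S \<subseteq> Q \<and> A i = \<Union>S" for i
      using Union(2)[of i] by blast
    then obtain S where "\<And>i. S i \<subseteq> Q \<and> A i = \<Union>(S i)" by metis
    then have "(\<Union>i. A i) = \<Union>(\<Union>i. S i)" "(\<Union>i. S i) \<subseteq> Q" by auto
    then show ?case by blast
  qed
qed

lemma sum_indicator_disjoint:
  fixes c :: "'a set \<Rightarrow> real"
  assumes "finite Q" "disjoint Q" "B \<in> Q" "w \<in> B"
  shows "(\<Sum>B'\<in>Q. c B' * indicator B' w) = c B"
proof -
  have "w \<notin> B'" if "B' \<in> Q - {B}" for B'
    using assms that unfolding disjoint_def by blast
  then have "(\<Sum>B'\<in>Q - {B}. c B' * indicator B' w) = 0"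
    by (intro sum.neutral) simp
  then show ?thesis
    using sum.remove[OF assms(1,3), of "\<lambda>B'. c B' * indicator B' w"] assms(4) by simp
qed

lemma set_integral_Union_disjoint:
  fixes f :: "'a \<Rightarrow> real"
  assumes "finite S" "disjoint S" "S \<subseteq> sets M" "\<And>B. B \<in> S \<Longrightarrow> set_integrable M B f"
  shows "(\<integral>x\<in>\<Union>S. f x \<partial>M) = (\<Sum>B\<in>S. \<integral>x\<in>B. f x \<partial>M)"
proof -
  have "AE x in M. x \<in> B \<and> x \<in> B' \<longrightarrow> B = B'" if "B \<in> S" "B' \<in> S" for B B'
    using assms(2) that unfolding disjoint_def by blast
  then have "(\<integral>x\<in>(\<Union>B\<in>S. B). f x \<partial>M) = (\<Sum>B\<in>S. \<integral>x\<in>B. f x \<partial>M)"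
    by (intro set_integral_finite_UN_AE) (use assms in auto)
  then show ?thesis by simp
qed

lemma cond_exp_part_cell_average:
  fixes X :: "'a \<Rightarrow> real"
  assumes "prob_space M" and Q: "Q \<in> partitions M" and X: "integrable M X"
  shows "AE w in M. \<forall>B\<in>Q. w \<in> B \<longrightarrow> cond_exp_part M Q X w = (\<integral>x\<in>B. X x \<partial>M) / measure M B"
proof -
  interpret prob_space M by fact
  have Qs: "Q \<subseteq> sets M" and fin: "finite Q" and disj: "disjoint Q" and cover: "\<Union>Q = space M"
    and pos: "\<And>B. B \<in> Q \<Longrightarrow> measure M B > 0"
    using Q unfolding partitions_def by auto
  define F where "F = sigma (space M) Q"
  interpret sigma_finite_subalgebra M F
    unfolding F_def using sigma_finite_subalgebra_sigma \<open>prob_space M\<close> Qs .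
  have sets_F: "sets F = sigma_sets (space M) Q"
    unfolding F_def using Qs sets.sets_into_space by (intro sets_measure_of) auto
  define avg where "avg B = (\<integral>x\<in>B. X x \<partial>M) / measure M B" for B
  define g where "g w = (\<Sum>B\<in>Q. avg B * indicator B w)" for w
  have g_cell: "g w = avg B" if "B \<in> Q" "w \<in> B" for B w
    unfolding g_def using fin disj that by (rule sum_indicator_disjoint)
  have "B \<in> sets F" if "B \<in> Q" for B
    unfolding sets_F using that by (rule sigma_sets.Basic)
  then have g_F: "g \<in> borel_measurable F"
    unfolding g_def by (intro borel_measurable_sum borel_measurable_times borel_measurable_const
      borel_measurable_indicator) auto
  have g_int: "integrable M g"
    unfolding g_def using Qs
    by (intro Bochner_Integration.integrable_sum integrable_mult_right integrable_real_indicator)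
       (auto simp: emeasure_eq_measure)
  have set_int: "set_integrable M B X" "set_integrable M B g" if "B \<in> sets M" for B
    unfolding set_integrable_def
    using integrable_mult_indicator[OF that X] integrable_mult_indicator[OF that g_int] by simp_all
  have cell_int: "(\<integral>x\<in>B. g x \<partial>M) = (\<integral>x\<in>B. X x \<partial>M)" if "B \<in> Q" for B
  proof -
    have "(\<integral>x\<in>B. g x \<partial>M) = (\<integral>x\<in>B. avg B \<partial>M)"
      using that Qs g_cell by (intro set_lebesgue_integral_cong) auto
    also have "\<dots> = (\<integral>x\<in>B. X x \<partial>M)"
      using that Qs pos[OF that] by (auto simp: set_integral_const emeasure_eq_measure avg_def)
    finally show ?thesis .
  qed
  have union_int: "(\<integral>x\<in>\<Union>S. f x \<partial>M) = (\<Sum>B\<in>S. \<integral>x\<in>B. f x \<partial>M)"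
    if "S \<subseteq> Q" "\<And>B. B \<in> sets M \<Longrightarrow> set_integrable M B f" for S and f :: "'a \<Rightarrow> real"
    using that Qs finite_subset[OF that(1) fin] pairwise_subset[OF disj that(1)]
    by (intro set_integral_Union_disjoint) auto
  have "AE w in M. real_cond_exp M F X w = g w"
  proof (rule real_cond_exp_charact)
    fix A assume "A \<in> sets F"
    then obtain S where "S \<subseteq> Q" "A = \<Union>S"
      using sigma_sets_partition_subset[OF disj cover] unfolding sets_F by auto
    moreover have "(\<Sum>B\<in>S. \<integral>x\<in>B. X x \<partial>M) = (\<Sum>B\<in>S. \<integral>x\<in>B. g x \<partial>M)"
      using \<open>S \<subseteq> Q\<close> cell_int by (intro sum.cong) auto
    ultimately show "(\<integral>x\<in>A. X x \<partial>M) = (\<integral>x\<in>A. g x \<partial>M)"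
      using union_int[of S X] union_int[of S g] set_int by simp
  qed (fact X g_int g_F)+
  then show ?thesis
    unfolding cond_exp_part_def F_def[symmetric] by eventually_elim (auto simp: g_cell avg_def)
qed

lemma cond_exp_part_abs_le:
  assumes "prob_space M" "P \<subseteq> sets M" "integrable M X" "AE w in M. \<bar>X w\<bar> \<le> C"
  shows "AE w in M. \<bar>cond_exp_part M P X w\<bar> \<le> C"
proof -
  interpret sigma_finite_subalgebra M "sigma (space M) P"
    using sigma_finite_subalgebra_sigma assms(1,2) .
  have "AE w in M. real_cond_exp M (sigma (space M) P) X w \<le> C"
    using assms(3,4) by (intro real_cond_exp_le_c) auto
  moreover have "AE w in M. real_cond_exp M (sigma (space M) P) X w \<ge> -C"
    using assms(3,4) by (intro real_cond_exp_ge_c) auto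
  ultimately show ?thesis unfolding cond_exp_part_def by eventually_elim auto
qed

definition ess_osc_le :: "'a measure \<Rightarrow> ('a \<Rightarrow> real) \<Rightarrow> real \<Rightarrow> 'a set \<Rightarrow> bool" where
  "ess_osc_le M X e B \<longleftrightarrow> (\<exists>a. AE w in M. w \<in> B \<longrightarrow> a \<le> X w \<and> X w \<le> a + e)"

lemma ess_osc_le_subset: "ess_osc_le M X e A \<Longrightarrow> B \<subseteq> A \<Longrightarrow> ess_osc_le M X e B"
  unfolding ess_osc_le_def by (fast elim: eventually_mono)

lemma cond_exp_part_dist_le_if_ess_osc_le:
  fixes X :: "'a \<Rightarrow> real"
  assumes "prob_space M" and Q: "Q \<in> partitions M" and X: "integrable M X"
    and osc: "\<And>B. B \<in> Q \<Longrightarrow> ess_osc_le M X e B"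
  shows "AE w in M. \<bar>cond_exp_part M Q X w - X w\<bar> \<le> e"
proof -
  interpret prob_space M by fact
  have fin: "finite Q" and Qs: "Q \<subseteq> sets M" and cover: "\<Union>Q = space M"
    and pos: "\<And>B. B \<in> Q \<Longrightarrow> measure M B > 0"
    using Q unfolding partitions_def by auto
  obtain a where a: "\<And>B. B \<in> Q \<Longrightarrow> AE w in M. w \<in> B \<longrightarrow> a B \<le> X w \<and> X w \<le> a B + e"
    using osc unfolding ess_osc_le_def by metis
  have "AE w in M. \<forall>B\<in>Q. w \<in> B \<longrightarrow> a B \<le> X w \<and> X w \<le> a B + e"
    using fin a by (intro AE_finite_allI) auto
  with cond_exp_part_cell_average[OF \<open>prob_space M\<close> Q X] AE_space
  show ?thesis
  proof eventually_elim
    case (elim w)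
    obtain B where B: "B \<in> Q" "w \<in> B" using elim(2) cover by blast
    with Qs pos set_integral_average_between[OF _ _ X a] elim show ?case
      by (fastforce simp: abs_le_iff)
  qed
qed

lemma (in prob_space) exists_partition_AE_const:
  assumes g[measurable]: "g \<in> measurable M (count_space UNIV)" and fin: "finite (g ` space M)"
  shows "\<exists>Q\<in>partitions M. \<forall>B\<in>Q. \<exists>k. AE w in M. w \<in> B \<longrightarrow> g w = k"
proof -
  define E where "E k = {w \<in> space M. g w = k}" for k
  have E[measurable]: "E k \<in> sets M" for k unfolding E_def by measurable
  define G where "G = {k \<in> g ` space M. measure M (E k) > 0}"
  have null: "AE w in M. \<forall>k \<in> g ` space M - G. w \<notin> E k"
    using fin by (intro AE_finite_allI) (auto simp: G_def measure_zero_iff_AE_notin[symmetric] not_less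
        measure_le_0_iff)
  have "G \<noteq> {}"
  proof
    assume "G = {}"
    from null AE_space have "AE w in M. False"
      by (rule eventually_elim2) (use \<open>G = {}\<close> in \<open>auto simp: E_def\<close>)
    then show False by simp
  qed
  then obtain k0 where "k0 \<in> G" by auto
  define h where "h w = (if g w \<in> G then g w else k0)" for w
  define H where "H k = {w \<in> space M. h w = k}" for k
  have [measurable]: "Measurable.pred M (\<lambda>w. g w \<in> G)"
    using measurable_compose[OF g, of "\<lambda>k. k \<in> G" "count_space UNIV"] by simp
  have [measurable]: "h \<in> measurable M (count_space UNIV)" unfolding h_def by measurable
  have H[measurable]: "H k \<in> sets M" for k unfolding H_def by measurable
  define Q where "Q = H ` G"
  have Q: "Q \<in> partitions M"
    unfolding partitions_def
  proof (intro CollectI conjI ballI)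
    show "finite Q" "Q \<subseteq> sets M" using fin by (auto simp: Q_def G_def)
    show "disjoint Q" by (auto simp: Q_def H_def disjoint_def)
    show "\<Union>Q = space M" using \<open>k0 \<in> G\<close> by (auto simp: Q_def H_def h_def)
  next
    fix B assume "B \<in> Q"
    then obtain k where "k \<in> G" "B = H k" by (auto simp: Q_def)
    moreover have "E k \<subseteq> H k" if "k \<in> G" for k using that by (auto simp: E_def H_def h_def)
    ultimately show "measure M B > 0"
      using finite_measure_mono[of "E k" "H k"] by (auto simp: G_def)
  qed
  have "AE w in M. w \<in> H k \<longrightarrow> g w = k" for k
    using null by eventually_elim (auto simp: H_def h_def E_def)
  then have "\<exists>k. AE w in M. w \<in> B \<longrightarrow> g w = k" if "B \<in> Q" for B
    using that unfolding Q_def by blast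
  with Q show ?thesis by blast
qed

lemma (in prob_space) exists_partition_ess_osc_le:
  fixes X :: "'a \<Rightarrow> real"
  assumes [measurable]: "X \<in> borel_measurable M" and bound: "AE w in M. \<bar>X w\<bar> \<le> C" and "e > 0"
  shows "\<exists>Q\<in>partitions M. \<forall>B\<in>Q. ess_osc_le M X e B"
proof -
  define g where "g w = \<lfloor>max (- C) (min C (X w)) / e\<rfloor>" for w
  have g[measurable]: "g \<in> measurable M (count_space UNIV)" unfolding g_def by measurable
  have "- \<bar>C\<bar> / e \<le> max (- C) (min C x) / e" "max (- C) (min C x) / e \<le> \<bar>C\<bar> / e" for x
    by (rule divide_right_mono, use \<open>e > 0\<close> in auto)+
  then have "g ` space M \<subseteq> {\<lfloor>- \<bar>C\<bar> / e\<rfloor> .. \<lfloor>\<bar>C\<bar> / e\<rfloor>}"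
    by (auto simp: g_def intro!: floor_mono)
  then have fin: "finite (g ` space M)" by (rule finite_subset) simp
  obtain Q where Q: "Q \<in> partitions M" and const: "\<forall>B\<in>Q. \<exists>k. AE w in M. w \<in> B \<longrightarrow> g w = k"
    using exists_partition_AE_const[OF g fin] by blast
  have "ess_osc_le M X e B" if "B \<in> Q" for B
  proof -
    from const that obtain k where "AE w in M. w \<in> B \<longrightarrow> g w = k" by blast
    with bound have "AE w in M. w \<in> B \<longrightarrow> k * e \<le> X w \<and> X w \<le> k * e + e"
    proof eventually_elim
      case (elim w)
      show ?case
      proof
        assume "w \<in> B"
        moreover have "max (- C) (min C (X w)) = X w" using elim(1) by (simp add: abs_le_iff)
        ultimately have "\<lfloor>X w / e\<rfloor> = k" using elim(2) by (simp add: g_def)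
        then have "k \<le> X w / e" "X w / e \<le> k + 1" by linarith+
        then show "k * e \<le> X w \<and> X w \<le> k * e + e"
          using \<open>e > 0\<close> by (simp add: field_simps)
      qed
    qed
    then show ?thesis unfolding ess_osc_le_def by blast
  qed
  with Q show ?thesis by blast
qed

section \<open>Order convergence\<close>

lemma order_conv_if_uniformly_convergent:
  fixes x :: "'i \<Rightarrow> 'a \<Rightarrow> real"
  assumes "prob_space M" "orlicz_fun \<Phi>" "X \<in> LPhi M \<Phi>" "\<And>i. i \<in> I \<Longrightarrow> x i \<in> LPhi M \<Phi>"
    and refl: "\<And>i. i \<in> I \<Longrightarrow> le i i"
    and trans: "\<And>i j k. i \<in> I \<Longrightarrow> j \<in> I \<Longrightarrow> k \<in> I \<Longrightarrow> le i j \<Longrightarrow> le j k \<Longrightarrow> le i k"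
    and bounded: "\<And>i. i \<in> I \<Longrightarrow> AE w in M. \<bar>x i w - X w\<bar> \<le> C"
    and small: "\<And>e. e > 0 \<Longrightarrow> \<exists>i\<in>I. \<forall>j\<in>I. le i j \<longrightarrow> (AE w in M. \<bar>x j w - X w\<bar> \<le> e)"
  shows "order_conv M \<Phi> I le x X"
proof -
  \<comment> \<open>\<open>c i\<close> is the best uniform bound on \<open>\<bar>x j - X\<bar>\<close> for all \<open>j\<close> beyond \<open>i\<close>\<close>
  define D where "D i = {e. e \<ge> 0 \<and> (\<forall>j\<in>I. le i j \<longrightarrow> (AE w in M. \<bar>x j w - X w\<bar> \<le> e))}" for i
  define c where "c i = Inf (D i)" for i
  have D_ne: "D i \<noteq> {}" if "i \<in> I" for i
  proof -
    have "AE w in M. \<bar>x j w - X w\<bar> \<le> max C 0" if "j \<in> I" for j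
      using bounded[OF that] by (rule eventually_mono) simp
    then have "max C 0 \<in> D i" unfolding D_def by simp
    then show ?thesis by auto
  qed
  have D_bdd: "bdd_below (D i)" for i unfolding D_def by (auto intro: bdd_belowI)
  have c_nonneg: "c i \<ge> 0" if "i \<in> I" for i
    unfolding c_def using D_ne[OF that] by (intro cInf_greatest) (auto simp: D_def)
  have c_le: "c i \<le> e" if "e \<in> D i" for i e
    unfolding c_def using that D_bdd by (rule cInf_lower)
  have c_mono: "c j \<le> c i" if "i \<in> I" "j \<in> I" "le i j" for i j
  proof -
    have "D i \<subseteq> D j" unfolding D_def using that trans by blast
    then show ?thesis unfolding c_def by (rule cInf_superset_mono[OF D_ne[OF that(1)] D_bdd])
  qed
  have c_dom: "AE w in M. \<bar>x i w - X w\<bar> \<le> c i" if i: "i \<in> I" for i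
  proof (rule AE_le_if_AE_le_add)
    fix e :: real assume "e > 0"
    then obtain d where "d \<in> D i" "d < c i + e"
      using cInf_lessD[OF D_ne[OF i], of "c i + e"] unfolding c_def by auto
    then show "AE w in M. \<bar>x i w - X w\<bar> \<le> c i + e"
      using i refl unfolding D_def by (auto elim: eventually_mono)
  qed
  have c_inf: "AE w in M. Z w \<le> 0" if "\<forall>i\<in>I. AE w in M. Z w \<le> c i" for Z :: "'a \<Rightarrow> real"
  proof (rule AE_le_if_AE_le_add)
    fix e :: real assume "e > 0"
    with small obtain i where "i \<in> I" "e \<in> D i" unfolding D_def by fastforce
    with that c_le show "AE w in M. Z w \<le> 0 + e" by (fastforce elim: eventually_mono)
  qed
  have "(\<lambda>w. c i) \<in> LPhi M \<Phi>" for i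
    using assms(1,2) by (rule bounded_in_LPhi) auto
  with assms(3,4) c_mono c_nonneg c_inf c_dom show ?thesis
    unfolding order_conv_def by (intro conjI exI[of _ "\<lambda>i w. c i"]) auto
qed

lemma order_conv_dominated:
  assumes "order_conv M \<Phi> I le x X" "i0 \<in> I" "\<And>i. i \<in> I \<Longrightarrow> le i0 i"
  shows "\<exists>Y\<in>borel_measurable M. \<forall>i\<in>I. AE w in M. \<bar>x i w - X w\<bar> \<le> Y w"
proof -
  from assms(1) have "\<exists>Y. (\<forall>i\<in>I. Y i \<in> LPhi M \<Phi>)
      \<and> (\<forall>i\<in>I. \<forall>j\<in>I. le i j \<longrightarrow> (AE w in M. Y j w \<le> Y i w))
      \<and> (\<forall>i\<in>I. AE w in M. \<bar>x i w - X w\<bar> \<le> Y i w)"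
    unfolding order_conv_def by blast
  then obtain Y where "\<forall>i\<in>I. Y i \<in> LPhi M \<Phi>"
    and mono: "\<forall>i\<in>I. \<forall>j\<in>I. le i j \<longrightarrow> (AE w in M. Y j w \<le> Y i w)"
    and dom: "\<forall>i\<in>I. AE w in M. \<bar>x i w - X w\<bar> \<le> Y i w"
    by blast
  have "AE w in M. \<bar>x i w - X w\<bar> \<le> Y i0 w" if "i \<in> I" for i
  proof -
    from dom that have "AE w in M. \<bar>x i w - X w\<bar> \<le> Y i w" by blast
    moreover from mono assms(2,3) that have "AE w in M. Y i w \<le> Y i0 w" by blast
    ultimately show ?thesis by eventually_elim simp
  qed
  moreover have "Y i0 \<in> borel_measurable M"
    using \<open>\<forall>i\<in>I. Y i \<in> LPhi M \<Phi>\<close> assms(2) by (blast intro: LPhi_measurable)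
  ultimately show ?thesis by blast
qed

lemma order_conv_cond_exp_part_if_Linf:
  fixes X :: "'a \<Rightarrow> real"
  assumes "prob_space M" "orlicz_fun \<Phi>" "X \<in> LPhi M \<Phi>" "X \<in> Linf M"
  shows "order_conv M \<Phi> (partitions M) part_refines (\<lambda>P. cond_exp_part M P X) X"
proof -
  interpret prob_space M by fact
  have Xm: "X \<in> borel_measurable M" using assms(3) by (rule LPhi_measurable)
  obtain C where bound: "AE w in M. \<bar>X w\<bar> \<le> C" using assms(4) unfolding Linf_def by auto
  have X: "integrable M X" using LPhi_integrable assms(1-3) .
  have E_bound: "AE w in M. \<bar>cond_exp_part M P X w\<bar> \<le> C" if "P \<in> partitions M" for P
    using that unfolding partitions_def by (intro cond_exp_part_abs_le[OF assms(1) _ X bound]) auto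
  show ?thesis
  proof (rule order_conv_if_uniformly_convergent[OF assms(1-3)])
    fix P assume P: "P \<in> partitions M"
    show "cond_exp_part M P X \<in> LPhi M \<Phi>"
      unfolding cond_exp_part_def
      using bounded_in_LPhi[OF assms(1,2) borel_measurable_cond_exp2 E_bound[OF P, unfolded cond_exp_part_def]] .
    show "AE w in M. \<bar>cond_exp_part M P X w - X w\<bar> \<le> 2 * C"
      using E_bound[OF P] bound by eventually_elim auto
  next
    fix e :: real assume "e > 0"
    then obtain Q where Q: "Q \<in> partitions M" and osc: "\<forall>A\<in>Q. ess_osc_le M X e A"
      using exists_partition_ess_osc_le[OF Xm bound] by blast
    have "AE w in M. \<bar>cond_exp_part M P X w - X w\<bar> \<le> e"
      if "P \<in> partitions M" "part_refines Q P" for P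
      using that osc ess_osc_le_subset unfolding part_refines_def
      by (intro cond_exp_part_dist_le_if_ess_osc_le[OF assms(1) _ X]) blast+
    with Q show "\<exists>Q\<in>partitions M. \<forall>P\<in>partitions M. part_refines Q P \<longrightarrow>
        (AE w in M. \<bar>cond_exp_part M P X w - X w\<bar> \<le> e)" by blast
  qed (auto intro: part_refines_refl part_refines_trans)
qed

section \<open>Unbounded random variables\<close>

lemma (in prob_space) unbounded_sign:
  fixes X :: "'a \<Rightarrow> real"
  assumes [measurable]: "X \<in> borel_measurable M" and "X \<notin> Linf M"
  obtains s :: real where "s = 1 \<or> s = -1" "\<And>m. measure M {w \<in> space M. s * X w > m} > 0"
proof -
  have "\<exists>s::real. (s = 1 \<or> s = -1) \<and> (\<forall>m. measure M {w \<in> space M. s * X w > m} > 0)"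
  proof (rule ccontr)
    assume "\<not> ?thesis"
    then obtain m1 m2 where "measure M {w \<in> space M. X w > m1} = 0"
      "measure M {w \<in> space M. - X w > m2} = 0"
      by (fastforce simp: not_less measure_le_0_iff)
    then have "AE w in M. w \<notin> {w \<in> space M. X w > m1}" "AE w in M. w \<notin> {w \<in> space M. - X w > m2}"
      by (simp_all add: measure_zero_iff_AE_notin)
    then have "AE w in M. \<bar>X w\<bar> \<le> max m1 m2"
      using AE_space by eventually_elim auto
    then show False using assms unfolding Linf_def by blast
  qed
  then show thesis using that by blast
qed

lemma (in prob_space) nonatomic_small_subset_compl_pos:
  assumes "nonatomic M" "A \<in> sets M" "measure M A > 0" "T \<in> sets M" "measure M T > 0" "A \<inter> T = {}"
  obtains A' where "A' \<in> sets M" "A' \<subseteq> A" "0 < measure M A'" "measure M A' \<le> measure M T"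
    "measure M (space M - (A' \<union> T)) > 0"
proof -
  obtain A' where A': "A' \<in> sets M" "A' \<subseteq> A" "0 < measure M A'"
    "measure M A' \<le> min (measure M T) (measure M A / 2)"
    using nonatomic_small_subset[OF assms(1-3), of "min (measure M T) (measure M A / 2)"] assms(3,5)
    by auto
  have "measure M (A - A') \<le> measure M (space M - (A' \<union> T))"
    using A' assms(2,4,6) sets.sets_into_space[OF assms(2)] by (intro finite_measure_mono) auto
  moreover have "measure M (A - A') = measure M A - measure M A'"
    using assms(2) A' by (intro finite_measure_Diff) auto
  ultimately show thesis using that A' assms(3) by auto
qed

lemma two_cell_partitions:
  assumes "C \<in> sets M" "measure M C > 0" "measure M (space M - C) > 0"
  shows "{C, space M - C} \<in> partitions M"
  unfolding partitions_def using assms sets.sets_into_space by (auto simp: disjoint_def)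

lemma (in prob_space) exists_partition_cond_exp_far:
  fixes X :: "'a \<Rightarrow> real"
  assumes "nonatomic M" and X: "integrable M X"
    and s: "s = 1 \<or> s = -1" and tail: "\<And>m. measure M {w \<in> space M. s * X w > m} > 0"
    and A: "A \<in> sets M" "measure M A > 0" and A_bound: "\<And>w. w \<in> A \<Longrightarrow> \<bar>X w\<bar> \<le> L"
    and "0 \<le> L" "0 \<le> K"
  shows "\<exists>Q\<in>partitions M. \<exists>A'\<in>sets M. A' \<subseteq> A \<and> 0 < measure M A'
           \<and> (AE w in M. w \<in> A' \<longrightarrow> K < \<bar>cond_exp_part M Q X w - X w\<bar>)"
proof -
  have [measurable]: "X \<in> borel_measurable M" using X by (rule borel_measurable_integrable)
  have sX_A: "\<bar>s * X w\<bar> \<le> L" if "w \<in> A" for w using s A_bound[OF that] by auto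
  \<comment> \<open>glue a small piece \<open>A'\<close> of \<open>A\<close> to a tail set \<open>T\<close> of \<open>s X\<close> that is at least as large:
    its average over the union is then at least \<open>(m - L) / 2 = K + L + 1\<close>,
    more than \<open>K\<close> above \<open>s X\<close> on \<open>A'\<close>\<close>
  define m where "m = 2 * K + 3 * L + 2"
  define T where "T = {w \<in> space M. s * X w > m}"
  have T: "T \<in> sets M" "measure M T > 0" unfolding T_def using tail by auto
  have A_not_T: "A \<inter> T = {}"
    using sX_A \<open>0 \<le> K\<close> \<open>0 \<le> L\<close> by (force simp: T_def m_def)
  obtain A' where A': "A' \<in> sets M" "A' \<subseteq> A" "0 < measure M A'" "measure M A' \<le> measure M T"
    and C_compl: "measure M (space M - (A' \<union> T)) > 0"
    using nonatomic_small_subset_compl_pos[OF assms(1) A T A_not_T] .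
  define C where "C = A' \<union> T"
  have "C \<in> sets M" using A' T by (simp add: C_def)
  moreover have "measure M A' \<le> measure M C"
    using \<open>C \<in> sets M\<close> by (intro finite_measure_mono) (auto simp: C_def)
  ultimately have C: "C \<in> sets M" "measure M C > 0" using A' by auto
  define Q where "Q = {C, space M - C}"
  have Q: "Q \<in> partitions M"
    unfolding Q_def using C C_compl by (intro two_cell_partitions) (auto simp: C_def)
  define a where "a = (\<integral>x\<in>C. X x \<partial>M) / measure M C"
  have lower_A': "- L \<le> s * X w" and upper_A': "s * X w \<le> L" if "w \<in> A'" for w
    using sX_A[OF subsetD[OF A'(2) that]] by (simp_all add: abs_le_iff)
  have "(m - L) / 2 * measure M C \<le> (\<integral>x\<in>C. s * X x \<partial>M)"
    unfolding C_def using A' T A_not_T lower_A' \<open>0 \<le> K\<close> \<open>0 \<le> L\<close> X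
    by (intro set_integral_Un_lower_bound) (auto simp: T_def m_def)
  then have "K + L + 1 \<le> s * a"
    using C(2) by (simp add: a_def m_def pos_le_divide_eq field_simps)
  have far: "K < \<bar>a - X w\<bar>" if "w \<in> A'" for w
  proof -
    have "K < s * a - s * X w" using \<open>K + L + 1 \<le> s * a\<close> upper_A'[OF that] by linarith
    also have "\<dots> \<le> \<bar>a - X w\<bar>" using s by auto
    finally show ?thesis .
  qed
  have "AE w in M. w \<in> C \<longrightarrow> cond_exp_part M Q X w = a"
    using cond_exp_part_cell_average[OF prob_space_axioms Q X] by (auto simp: Q_def a_def)
  then have "AE w in M. w \<in> A' \<longrightarrow> K < \<bar>cond_exp_part M Q X w - X w\<bar>"
    by eventually_elim (use far in \<open>auto simp: C_def\<close>)
  with Q A' show ?thesis by blast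
qed

lemma (in prob_space) cond_exp_part_not_dominated:
  fixes X Y :: "'a \<Rightarrow> real"
  assumes "nonatomic M" "integrable M X" "X \<notin> Linf M" and [measurable]: "Y \<in> borel_measurable M"
  shows "\<exists>P\<in>partitions M. \<not> (AE w in M. \<bar>cond_exp_part M P X w - X w\<bar> \<le> Y w)"
proof -
  have X[measurable]: "X \<in> borel_measurable M" using assms(2) by (rule borel_measurable_integrable)
  obtain s where s: "s = 1 \<or> s = -1" "\<And>m. measure M {w \<in> space M. s * X w > m} > 0"
    using unbounded_sign[OF X assms(3)] by blast
  obtain n :: nat where n: "measure M {w \<in> space M. max \<bar>X w\<bar> (Y w) \<le> n} > 0"
    using exists_nat_measure_le_pos[of "\<lambda>w. max \<bar>X w\<bar> (Y w)"] by auto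
  define A where "A = {w \<in> space M. max \<bar>X w\<bar> (Y w) \<le> n}"
  have A: "A \<in> sets M" "measure M A > 0" using n by (auto simp: A_def)
  have "\<bar>X w\<bar> \<le> real n" if "w \<in> A" for w using that by (simp add: A_def)
  from exists_partition_cond_exp_far[OF assms(1,2) s A this of_nat_0_le_iff of_nat_0_le_iff[of n]]
  obtain Q A'
    where Q: "Q \<in> partitions M" and A': "A' \<in> sets M" "A' \<subseteq> A" "0 < measure M A'"
    and far: "AE w in M. w \<in> A' \<longrightarrow> real n < \<bar>cond_exp_part M Q X w - X w\<bar>"
    by auto
  have "\<not> (AE w in M. \<bar>cond_exp_part M Q X w - X w\<bar> \<le> Y w)"
  proof
    assume "AE w in M. \<bar>cond_exp_part M Q X w - X w\<bar> \<le> Y w"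
    with far have "AE w in M. w \<notin> A'"
      by eventually_elim (use A'(2) in \<open>auto simp: A_def\<close>)
    with A' show False by (simp add: measure_zero_iff_AE_notin[symmetric])
  qed
  with Q show ?thesis by blast
qed

theorem proposition3p3:
  fixes M :: "'a measure" and \<Phi> :: "real \<Rightarrow> real" and X :: "'a \<Rightarrow> real"
  assumes "prob_space M"
    and "nonatomic M"
    and "orlicz_fun \<Phi>"
    and "X \<in> LPhi M \<Phi>"
  shows "order_conv M \<Phi> (partitions M) part_refines (\<lambda>P. cond_exp_part M P X) X
           \<longleftrightarrow> X \<in> Linf M"
proof
  assume conv: "order_conv M \<Phi> (partitions M) part_refines (\<lambda>P. cond_exp_part M P X) X"
  from order_conv_dominated[OF conv partitions_trivial[OF assms(1)] part_refines_trivial]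
  obtain Y where Y: "Y \<in> borel_measurable M"
    and dom: "\<forall>P\<in>partitions M. AE w in M. \<bar>cond_exp_part M P X w - X w\<bar> \<le> Y w"
    by blast
  have X: "integrable M X" using LPhi_integrable assms(1,3,4) .
  show "X \<in> Linf M"
  proof (rule ccontr)
    assume "X \<notin> Linf M"
    with prob_space.cond_exp_part_not_dominated[OF assms(1,2) X _ Y] obtain P
      where "P \<in> partitions M" "\<not> (AE w in M. \<bar>cond_exp_part M P X w - X w\<bar> \<le> Y w)"
      by blast
    with dom show False by blast
  qed
next
  assume "X \<in> Linf M"
  then show "order_conv M \<Phi> (partitions M) part_refines (\<lambda>P. cond_exp_part M P X) X"
    using order_conv_cond_exp_part_if_Linf assms(1,3,4) by blast
qed

end
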